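(* Let $1 \leq k \leq n$, let $l, u \in \mathbb{R}^n$ with $l_i \leq u_i$ for all $i$, and let $x \in \mathbb{R}^n$ satisfy $l_i \leq x_i \leq u_i$ for all $i$. Put $L = Q_k(l)$. Then for every subset $W \subseteq \{1, \ldots, n\}$ with $|W| \geq k$ and every real $U > L$, $$Q_k(x) \geq L + \frac{U - L}{|W| - k + 1}\left(\sum_{i \in W} \frac{x_i - L}{\max(U, u_i) - L} - k + 1\right).$$
   Context: For $y \in \mathbb{R}^n$ and an integer $1 \leq k \leq n$, $Q_k(y)$ denotes the $k$-th largest entry of $y$ (entries counted with multiplicity). *)

theory Defs
  imports "HOL-Analysis.Analysis" "HOL-Library.Multiset"
begin

definition kth_largest :: "nat \<Rightarrow> real ^ 'n \<Rightarrow> real" where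
  "kth_largest k y =
     rev (sorted_list_of_multiset (image_mset (\<lambda>i. y $ i) (mset_set (UNIV :: 'n set)))) ! (k - 1)"

end

theory Submission
  imports Defs
begin

text \<open>Write \<open>L = Q\<^sub>k(l)\<close>, \<open>Q = Q\<^sub>k(x)\<close> and normalise
  \<open>t\<^sub>i = (x\<^sub>i - L) / (max U u\<^sub>i - L) \<le> 1\<close>. Since \<open>l \<le> x\<close> gives \<open>L \<le> Q\<close>,
  every \<open>i\<close> with \<open>x\<^sub>i \<le> Q\<close> has \<open>t\<^sub>i \<le> s = min 1 ((Q - L) / (U - L))\<close>, and at most
  \<open>k - 1\<close> entries of \<open>x\<close> exceed \<open>Q\<close>. Hence
  \<open>(\<Sum>i\<in>W. t\<^sub>i) \<le> (k - 1) + (|W| - k + 1) s\<close>, which rearranges to the claim since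
  \<open>(U - L) s \<le> Q - L\<close>.\<close>

lemma length_filter_take_drop:
  "length (filter P xs) = length (filter P (take j xs)) + length (filter P (drop j xs))"
  by (metis append_take_drop_id filter_append length_append)

lemma sorted_length_filter_greater_nth:
  fixes xs :: "'a::linorder list"
  assumes "sorted xs" and "j < length xs"
  shows "length (filter (\<lambda>v. xs ! j < v) xs) \<le> length xs - Suc j"
proof -
  have "filter (\<lambda>v. xs ! j < v) (take (Suc j) xs) = []"
    using assms by (auto simp: filter_empty_conv in_set_conv_nth less_Suc_eq_le)
      (meson leD sorted_nth_mono)
  then show ?thesis
    using length_filter_take_drop[of "\<lambda>v. xs ! j < v" xs "Suc j"]
      length_filter_le[of "\<lambda>v. xs ! j < v" "drop (Suc j) xs"] by simp
qed

lemma sorted_length_filter_ge_nth: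
  fixes xs :: "'a::linorder list"
  assumes "sorted xs" and "j < length xs"
  shows "length xs - j \<le> length (filter (\<lambda>v. xs ! j \<le> v) xs)"
proof -
  have "filter (\<lambda>v. xs ! j \<le> v) (drop j xs) = drop j xs"
    using assms by (auto simp: filter_id_conv in_set_conv_nth sorted_nth_mono)
  then show ?thesis
    using length_filter_take_drop[of "\<lambda>v. xs ! j \<le> v" xs j] by simp
qed

definition sorted_entries :: "'a::linorder ^ 'n \<Rightarrow> 'a list" where
  "sorted_entries y = sorted_list_of_multiset (image_mset (\<lambda>i. y $ i) (mset_set UNIV))"

lemma sorted_sorted_entries: "sorted (sorted_entries y)"
  by (simp add: sorted_entries_def)

lemma length_filter_sorted_entries:
  "length (filter P (sorted_entries y)) = card {i. P (y $ i)}"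
proof -
  have "length (filter P (sorted_entries y)) = size (filter_mset P (mset (sorted_entries y)))"
    by (simp flip: mset_filter)
  then show ?thesis
    by (simp add: sorted_entries_def filter_mset_image_mset filter_mset_mset_set)
qed

lemma length_sorted_entries: "length (sorted_entries (y :: 'a::linorder ^ 'n)) = CARD('n)"
  using length_filter_sorted_entries[of "\<lambda>_. True" y] by simp

lemma kth_largest_eq_nth:
  assumes "1 \<le> k" and "k \<le> CARD('n)"
  shows "kth_largest k (y :: real ^ 'n) = sorted_entries y ! (CARD('n) - k)"
  using assms
  by (simp add: kth_largest_def sorted_entries_def[symmetric] rev_nth length_sorted_entries)

lemma card_greater_kth_largest:
  fixes y :: "real ^ 'n"
  assumes "1 \<le> k" and "k \<le> CARD('n)"
  shows "card {i. kth_largest k y < y $ i} < k"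
  using sorted_length_filter_greater_nth[OF sorted_sorted_entries, of "CARD('n) - k" y] assms
  by (simp add: kth_largest_eq_nth length_sorted_entries length_filter_sorted_entries)

lemma card_ge_kth_largest:
  fixes y :: "real ^ 'n"
  assumes "1 \<le> k" and "k \<le> CARD('n)"
  shows "k \<le> card {i. kth_largest k y \<le> y $ i}"
  using sorted_length_filter_ge_nth[OF sorted_sorted_entries, of "CARD('n) - k" y] assms
  by (simp add: kth_largest_eq_nth length_sorted_entries length_filter_sorted_entries)

lemma kth_largest_mono:
  fixes l x :: "real ^ 'n"
  assumes "1 \<le> k" and "k \<le> CARD('n)" and "\<And>i. l $ i \<le> x $ i"
  shows "kth_largest k l \<le> kth_largest k x"
proof (rule ccontr)
  assume "\<not> kth_largest k l \<le> kth_largest k x"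
  then have "{i. kth_largest k l \<le> l $ i} \<subseteq> {i. kth_largest k x < x $ i}"
    using assms(3) by (auto simp: not_le) (meson less_le_trans)
  then have "card {i. kth_largest k l \<le> l $ i} \<le> card {i. kth_largest k x < x $ i}"
    by (intro card_mono) auto
  then show False
    using card_ge_kth_largest[OF assms(1,2), of l] card_greater_kth_largest[OF assms(1,2), of x]
    by linarith
qed

lemma sum_le_few_above_threshold:
  fixes f :: "'a \<Rightarrow> real"
  assumes "finite W" and "\<And>i. i \<in> W \<Longrightarrow> f i \<le> 1" and "s \<le> 1"
    and "card {i\<in>W. s < f i} \<le> j" and "j \<le> card W"
  shows "sum f W \<le> real j + real (card W - j) * s"
proof -
  define A where "A = {i\<in>W. s < f i}"
  have "A \<subseteq> W" and "finite A" using assms(1) by (auto simp: A_def)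
  then have card_A: "card A \<le> card W" and card_diff: "card (W - A) = card W - card A"
    using assms(1) by (auto simp: card_mono card_Diff_subset)
  have "sum f W = sum f A + sum f (W - A)"
    using \<open>A \<subseteq> W\<close> assms(1) by (simp add: sum.subset_diff)
  also have "\<dots> \<le> (\<Sum>i\<in>A. 1) + (\<Sum>i\<in>W - A. s)"
    using assms(2) \<open>A \<subseteq> W\<close> by (intro add_mono sum_mono) (auto simp: A_def)
  also have "\<dots> = real (card A) * (1 - s) + real (card W) * s"
    using card_diff card_A by (simp add: of_nat_diff algebra_simps)
  also have "\<dots> \<le> real j * (1 - s) + real (card W) * s"
    using assms(3,4) by (intro add_right_mono mult_right_mono) (auto simp: A_def)
  also have "\<dots> = real j + real (card W - j) * s"
    using assms(5) by (simp add: of_nat_diff algebra_simps)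
  finally show ?thesis .
qed

lemma sum_le_by_kth_largest:
  fixes x :: "real ^ 'n" and f :: "'n \<Rightarrow> real"
  assumes "1 \<le> k" and "k \<le> CARD('n)" and "k \<le> card W"
    and "\<And>i. f i \<le> 1" and "s \<le> 1" and "\<And>i. x $ i \<le> kth_largest k x \<Longrightarrow> f i \<le> s"
  shows "sum f W \<le> real k - 1 + real (card W - k + 1) * s"
proof -
  have "{i\<in>W. s < f i} \<subseteq> {i. kth_largest k x < x $ i}"
    using assms(6) by (auto simp: not_le[symmetric])
  then have "card {i\<in>W. s < f i} \<le> card {i. kth_largest k x < x $ i}"
    by (intro card_mono) auto
  also have "\<dots> < k"
    using card_greater_kth_largest[OF assms(1,2)] .
  finally have "sum f W \<le> real (k - 1) + real (card W - (k - 1)) * s"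
    using assms(3-5) by (intro sum_le_few_above_threshold) auto
  then show ?thesis
    using assms(1,3) by (simp add: Suc_diff_le of_nat_diff)
qed

theorem theorem4:
  fixes l u x :: "real ^ 'n" and k :: nat and W :: "'n set" and U :: real
  assumes "1 \<le> k" and "k \<le> CARD('n)"
    and "\<And>i. l $ i \<le> u $ i"
    and "\<And>i. l $ i \<le> x $ i" and "\<And>i. x $ i \<le> u $ i"
    and "card W \<ge> k"
    and "U > kth_largest k l"
  shows "kth_largest k x \<ge> kth_largest k l
           + (U - kth_largest k l) / real (card W - k + 1)
             * ((\<Sum>i\<in>W. (x $ i - kth_largest k l) / (max U (u $ i) - kth_largest k l))
                - real k + 1)"
proof -
  define L where "L = kth_largest k l"
  define Q where "Q = kth_largest k x"
  define t where "t i = (x $ i - L) / (max U (u $ i) - L)" for i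
  define s where "s = min 1 ((Q - L) / (U - L))"
  have "L < U" and "L \<le> Q"
    using assms(7) kth_largest_mono[OF assms(1,2,4)] by (simp_all add: L_def Q_def)
  have t_le_1: "t i \<le> 1" for i
    using \<open>L < U\<close> assms(5)[of i] by (simp add: t_def)
  have "t i \<le> s" if "x $ i \<le> Q" for i
    using \<open>L < U\<close> \<open>L \<le> Q\<close> that t_le_1[of i] by (simp add: t_def s_def frac_le)
  then have "sum t W - real k + 1 \<le> real (card W - k + 1) * s"
    using sum_le_by_kth_largest[OF assms(1,2,6), of t s x] t_le_1 by (simp add: Q_def s_def)
  then have "(U - L) / real (card W - k + 1) * (sum t W - real k + 1)
      \<le> (U - L) / real (card W - k + 1) * (real (card W - k + 1) * s)"
    using \<open>L < U\<close> by (intro mult_left_mono) auto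
  also have "\<dots> = (U - L) * s"
    by simp
  also have "\<dots> \<le> (U - L) * ((Q - L) / (U - L))"
    using \<open>L < U\<close> by (intro mult_left_mono) (auto simp: s_def)
  also have "\<dots> = Q - L"
    using \<open>L < U\<close> by simp
  finally show ?thesis
    by (simp add: L_def Q_def t_def)
qed

end
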